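(* Let $p\ge1$, $m=2p$, $N\ge0$, and let $\beta(0),\dots,\beta(N)$ be $p\times m$ matrices with $\beta(k)J\beta(k)^*=I_p$. Put $C_k=2K^*\beta(k)^*\beta(k)K-j$, let $W_k$ be the solution of $W_{k+1}(\lambda)-W_k(\lambda)=-\frac{i}{\lambda}jC_kW_k(\lambda)$ with $W_0=I_m$, and $\mathcal W(\lambda)=\{\mathcal W_{ij}(\lambda)\}_{i,j=1}^2=KW_{N+1}(\bar\lambda)^*$ ($p\times p$ blocks). Let $R,Q$ be $p\times p$ matrix functions meromorphic in $\mathbb C_-$, well defined at $\lambda=-i$, with $R(\lambda)^*R(\lambda)+Q(\lambda)^*Q(\lambda)>0$ and $R(\lambda)^*R(\lambda)\le Q(\lambda)^*Q(\lambda)$. Then $\det\big(\mathcal W_{11}(-i)R(-i)+\mathcal W_{12}(-i)Q(-i)\big)\neq0$.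
   Context: $\mathbb C_-$ is the open lower half-plane; $j=\mathrm{diag}(I_p,-I_p)$, $J=\begin{bmatrix}0&I_p\\ I_p&0\end{bmatrix}$, $K=\frac1{\sqrt2}\begin{bmatrix}I_p&-I_p\\ I_p&I_p\end{bmatrix}$. *)

theory Defs
  imports "HOL-Complex_Analysis.Complex_Analysis" "Jordan_Normal_Form.Schur_Decomposition"
begin

definition jmat :: "nat \<Rightarrow> complex mat" where
  "jmat p = four_block_mat (1\<^sub>m p) (0\<^sub>m p p) (0\<^sub>m p p) (- 1\<^sub>m p)"

definition Jmat :: "nat \<Rightarrow> complex mat" where
  "Jmat p = four_block_mat (0\<^sub>m p p) (1\<^sub>m p) (1\<^sub>m p) (0\<^sub>m p p)"

definition Kmat :: "nat \<Rightarrow> complex mat" where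
  "Kmat p = complex_of_real (1 / sqrt 2) \<cdot>\<^sub>m
              four_block_mat (1\<^sub>m p) (- 1\<^sub>m p) (1\<^sub>m p) (1\<^sub>m p)"

definition Cmat :: "nat \<Rightarrow> (nat \<Rightarrow> complex mat) \<Rightarrow> nat \<Rightarrow> complex mat" where
  "Cmat p \<beta> k = 2 \<cdot>\<^sub>m (mat_adjoint (Kmat p) * mat_adjoint (\<beta> k) * \<beta> k * Kmat p) - jmat p"

fun Wmat :: "nat \<Rightarrow> (nat \<Rightarrow> complex mat) \<Rightarrow> nat \<Rightarrow> complex \<Rightarrow> complex mat" where
  "Wmat p \<beta> 0 l = 1\<^sub>m (2 * p)"
| "Wmat p \<beta> (Suc k) l = Wmat p \<beta> k l - (\<i> / l) \<cdot>\<^sub>m (jmat p * Cmat p \<beta> k * Wmat p \<beta> k l)"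

definition calW :: "nat \<Rightarrow> (nat \<Rightarrow> complex mat) \<Rightarrow> nat \<Rightarrow> complex \<Rightarrow> complex mat" where
  "calW p \<beta> N l = Kmat p * mat_adjoint (Wmat p \<beta> (Suc N) (cnj l))"

definition blk11 :: "nat \<Rightarrow> complex mat \<Rightarrow> complex mat" where
  "blk11 p A = (case split_block A p p of (A11, A12, A21, A22) \<Rightarrow> A11)"
definition blk12 :: "nat \<Rightarrow> complex mat \<Rightarrow> complex mat" where
  "blk12 p A = (case split_block A p p of (A11, A12, A21, A22) \<Rightarrow> A12)"

definition posdef :: "complex mat \<Rightarrow> bool" where
  "posdef H \<longleftrightarrow> H \<in> carrier_mat (dim_row H) (dim_row H) \<and> mat_adjoint H = H \<and>
     (\<forall>v \<in> carrier_vec (dim_row H). v \<noteq> 0\<^sub>v (dim_row H) \<longrightarrow> 0 < Re ((H *\<^sub>v v) \<bullet>c v))"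

definition psd :: "complex mat \<Rightarrow> bool" where
  "psd H \<longleftrightarrow> H \<in> carrier_mat (dim_row H) (dim_row H) \<and> mat_adjoint H = H \<and>
     (\<forall>v \<in> carrier_vec (dim_row H). 0 \<le> Re ((H *\<^sub>v v) \<bullet>c v))"

definition lower_half :: "complex set" where
  "lower_half = {z. Im z < 0}"

end

theory Submission
  imports Defs
begin

text \<open>
  At \<open>\<lambda> = -\<i>\<close> the transfer matrix is taken at \<open>cnj \<lambda> = \<i>\<close>, where the factor \<open>\<i>/\<lambda>\<close> of
  the recursion is \<open>1\<close>. Hence \<open>W\<^sub>N\<^sub>+\<^sub>1(\<i>)\<^sup>* = (I - C\<^sub>0 j) \<cdots> (I - C\<^sub>N j)\<close>, and
  \<open>I - C\<^sub>k j = 2 (I - G\<^sup>* G j)\<close> for \<open>G = \<beta>(k) K\<close>. As \<open>K j K\<^sup>* = J\<close>, the normalisation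
  \<open>\<beta>(k) J \<beta>(k)\<^sup>* = I\<close> reads \<open>G j G\<^sup>* = I\<close>; then \<open>u \<mapsto> u - G\<^sup>* G j u\<close> lowers \<open>u\<^sup>* j u\<close>
  by \<open>|G j u|\<^sup>2\<close> and maps into the kernel of \<open>G j\<close>. So every factor sends nonzero vectors
  with \<open>u\<^sup>* j u \<le> 0\<close> to such vectors, and the last one applied (\<open>k = 0\<close>) lands in the kernel
  of \<open>\<beta>(0) K j\<close>.

  If \<open>(\<W>\<^sub>1\<^sub>1 R + \<W>\<^sub>1\<^sub>2 Q) x = 0\<close> with \<open>x \<noteq> 0\<close>, the hypotheses on \<open>R, Q\<close> make
  \<open>u = (R x, Q x)\<close> such a vector, so \<open>v = W\<^sub>N\<^sub>+\<^sub>1(\<i>)\<^sup>* u \<noteq> 0\<close> and \<open>\<beta>(0) K j v = 0\<close>.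
  But \<open>(\<W>\<^sub>1\<^sub>1 R + \<W>\<^sub>1\<^sub>2 Q) x\<close> is the upper half of \<open>K v\<close>; its vanishing forces
  \<open>v = (a, a)\<close>, and then \<open>\<beta>(0) K j v = \<surd>2 \<beta>\<^sub>1 a\<close> with \<open>\<beta>\<^sub>1\<close> the left \<open>p \<times> p\<close> block of
  \<open>\<beta>(0)\<close>, which is invertible since \<open>\<beta>(0) J \<beta>(0)\<^sup>* = I\<close>. Hence \<open>a = 0\<close>, a contradiction.
\<close>

unbundle no vec_syntax
no_notation fps_nth (infixl \<open>$\<close> 75)

section \<open>Adjoints and block vectors\<close>

lemma mat_adjoint_eq_mat:
  fixes A :: "complex mat"
  shows "mat_adjoint A = mat (dim_col A) (dim_row A) (\<lambda>(i, j). cnj (A $$ (j, i)))"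
  unfolding mat_adjoint_def mat_of_rows_def by (rule eq_matI) (simp_all add: cols_def)

lemma mat_adjoint_dim [simp]:
  fixes A :: "complex mat"
  shows "dim_row (mat_adjoint A) = dim_col A" "dim_col (mat_adjoint A) = dim_row A"
  by (simp_all add: mat_adjoint_eq_mat)

lemma mat_adjoint_index [simp]:
  fixes A :: "complex mat"
  shows "i < dim_col A \<Longrightarrow> j < dim_row A \<Longrightarrow> mat_adjoint A $$ (i, j) = cnj (A $$ (j, i))"
  by (simp add: mat_adjoint_eq_mat)

lemma mat_adjoint_carrier [simp]:
  fixes A :: "complex mat"
  shows "A \<in> carrier_mat n m \<Longrightarrow> mat_adjoint A \<in> carrier_mat m n"
  unfolding carrier_mat_def by simp

lemma mat_adjoint_adjoint [simp]:
  fixes A :: "complex mat"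
  shows "mat_adjoint (mat_adjoint A) = A"
  by (rule eq_matI) auto

lemma mat_adjoint_one [simp]: "mat_adjoint (1\<^sub>m n :: complex mat) = 1\<^sub>m n"
  by (rule eq_matI) auto

lemma mat_adjoint_mult:
  fixes A B :: "complex mat"
  assumes "A \<in> carrier_mat n m" "B \<in> carrier_mat m k"
  shows "mat_adjoint (A * B) = mat_adjoint B * mat_adjoint A"
  using assms by (intro eq_matI) (auto simp: scalar_prod_def mult.commute intro!: sum.cong)

lemma mat_adjoint_minus:
  fixes A B :: "complex mat"
  assumes "A \<in> carrier_mat n m" "B \<in> carrier_mat n m"
  shows "mat_adjoint (A - B) = mat_adjoint A - mat_adjoint B"
  using assms by (intro eq_matI) auto

lemma mat_adjoint_smult:
  fixes A :: "complex mat"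
  shows "mat_adjoint (c \<cdot>\<^sub>m A) = cnj c \<cdot>\<^sub>m mat_adjoint A"
  by (intro eq_matI) auto

lemma cscalar_prod_mat_adjoint:
  fixes A :: "complex mat"
  assumes "A \<in> carrier_mat n m" "v \<in> carrier_vec m" "w \<in> carrier_vec n"
  shows "(A *\<^sub>v v) \<bullet>c w = v \<bullet>c (mat_adjoint A *\<^sub>v w)"
proof -
  have "(A *\<^sub>v v) \<bullet>c w = (\<Sum>i<n. \<Sum>k<m. A $$ (i, k) * v $ k * cnj (w $ i))"
    using assms by (simp add: scalar_prod_def sum_distrib_right atLeast0LessThan)
  also have "\<dots> = (\<Sum>k<m. \<Sum>i<n. A $$ (i, k) * v $ k * cnj (w $ i))"
    by (rule sum.swap)
  also have "\<dots> = v \<bullet>c (mat_adjoint A *\<^sub>v w)"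
    using assms by (simp add: scalar_prod_def sum_distrib_left atLeast0LessThan mult_ac)
  finally show ?thesis .
qed

lemma cscalar_prod_adjoint_mult_self:
  fixes A :: "complex mat"
  assumes "A \<in> carrier_mat n m" "x \<in> carrier_vec m"
  shows "((mat_adjoint A * A) *\<^sub>v x) \<bullet>c x = (A *\<^sub>v x) \<bullet>c (A *\<^sub>v x)"
  using cscalar_prod_mat_adjoint[OF mat_adjoint_carrier[OF assms(1)] mult_mat_vec_carrier[OF assms] assms(2)]
    assoc_mult_mat_vec[OF mat_adjoint_carrier[OF assms(1)] assms] by simp

lemma mult_mat_adjoint_congruence:
  fixes A B C :: "complex mat"
  assumes A: "A \<in> carrier_mat n m" and B: "B \<in> carrier_mat m m" and C: "C \<in> carrier_mat m m"
  shows "A * B * C * mat_adjoint (A * B) = A * (B * C * mat_adjoint B) * mat_adjoint A"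
proof -
  have B': "mat_adjoint B \<in> carrier_mat m m" and A': "mat_adjoint A \<in> carrier_mat m n"
    using A B by simp_all
  have BC: "B * C \<in> carrier_mat m m" and BCB: "B * C * mat_adjoint B \<in> carrier_mat m m"
    using mult_carrier_mat[OF B C] mult_carrier_mat[OF mult_carrier_mat[OF B C] B'] by simp_all
  have "A * B * C * mat_adjoint (A * B) = A * (B * C) * (mat_adjoint B * mat_adjoint A)"
    unfolding mat_adjoint_mult[OF A B] assoc_mult_mat[OF A B C] ..
  also have "\<dots> = A * ((B * C * mat_adjoint B) * mat_adjoint A)"
    using assoc_mult_mat[OF BC B' A'] assoc_mult_mat[OF A BC mult_carrier_mat[OF B' A']] by simp
  also have "\<dots> = A * (B * C * mat_adjoint B) * mat_adjoint A"
    using assoc_mult_mat[OF A BCB A'] by simp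
  finally show ?thesis .
qed

lemma cscalar_prod_congruence:
  fixes A M :: "complex mat"
  assumes A: "A \<in> carrier_mat n m" and M: "M \<in> carrier_mat m m" and y: "y \<in> carrier_vec n"
  shows "((A * M * mat_adjoint A) *\<^sub>v y) \<bullet>c y = (M *\<^sub>v (mat_adjoint A *\<^sub>v y)) \<bullet>c (mat_adjoint A *\<^sub>v y)"
proof -
  have s: "mat_adjoint A *\<^sub>v y \<in> carrier_vec m"
    using mult_mat_vec_carrier[OF mat_adjoint_carrier[OF A] y] .
  have "(A * M * mat_adjoint A) *\<^sub>v y = A *\<^sub>v (M *\<^sub>v (mat_adjoint A *\<^sub>v y))"
    using assoc_mult_mat_vec[OF mult_carrier_mat[OF A M] mat_adjoint_carrier[OF A] y]
      assoc_mult_mat_vec[OF A M s] by simp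
  then show ?thesis
    using cscalar_prod_mat_adjoint[OF A mult_mat_vec_carrier[OF M s] y] by simp
qed

lemma inj_if_mat_adjoint_inj:
  fixes A :: "complex mat"
  assumes A: "A \<in> carrier_mat n n"
    and adjoint_inj: "\<And>y. y \<in> carrier_vec n \<Longrightarrow> mat_adjoint A *\<^sub>v y = 0\<^sub>v n \<Longrightarrow> y = 0\<^sub>v n"
    and x: "x \<in> carrier_vec n" "A *\<^sub>v x = 0\<^sub>v n"
  shows "x = 0\<^sub>v n"
proof (rule ccontr)
  assume "x \<noteq> 0\<^sub>v n"
  then have "det (transpose_mat A) = 0"
    using det_0_iff_vec_prod_zero[OF A] x det_transpose[OF A] by auto
  then obtain y where y: "y \<in> carrier_vec n" "y \<noteq> 0\<^sub>v n" "transpose_mat A *\<^sub>v y = 0\<^sub>v n"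
    using det_0_iff_vec_prod_zero[of "transpose_mat A" n] A by auto
  have "mat_adjoint A *\<^sub>v conjugate y = conjugate (transpose_mat A *\<^sub>v y)"
    using A y(1) by (intro eq_vecI) (auto simp: scalar_prod_def)
  then have "conjugate y = 0\<^sub>v n"
    using adjoint_inj[of "conjugate y"] y by simp
  then show False
    using y(2) by simp
qed

lemma cscalar_prod_minus_right:
  fixes a b c :: "complex vec"
  assumes "a \<in> carrier_vec n" "b \<in> carrier_vec n" "c \<in> carrier_vec n"
  shows "c \<bullet>c (a - b) = c \<bullet>c a - c \<bullet>c b"
  using assms by (simp add: scalar_prod_def sum_subtractf right_diff_distrib)

lemma smult_mat_mult_vec:
  fixes A :: "'a :: comm_ring mat"
  assumes "A \<in> carrier_mat n m" "v \<in> carrier_vec m"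
  shows "(c \<cdot>\<^sub>m A) *\<^sub>v v = c \<cdot>\<^sub>v (A *\<^sub>v v)"
  using assms by (intro eq_vecI) (auto simp: scalar_prod_def sum_distrib_left mult.assoc)

lemma mult_mat_vec_zero: "A \<in> carrier_mat n m \<Longrightarrow> A *\<^sub>v 0\<^sub>v m = (0\<^sub>v n :: 'a :: semiring_0 vec)"
  by (intro eq_vecI) (auto simp: scalar_prod_def)

lemma smult_zero_vec [simp]: "c \<cdot>\<^sub>v 0\<^sub>v n = (0\<^sub>v n :: 'a :: semiring_0 vec)"
  by (intro eq_vecI) auto

lemma smult_vec_eq_zero_iff:
  fixes c :: "'a :: field"
  assumes "c \<noteq> 0" "w \<in> carrier_vec n"
  shows "c \<cdot>\<^sub>v w = 0\<^sub>v n \<longleftrightarrow> w = 0\<^sub>v n"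
  using assms by (auto simp: vec_eq_iff)

lemma smult_append_vec: "c \<cdot>\<^sub>v (a @\<^sub>v b) = (c \<cdot>\<^sub>v a) @\<^sub>v (c \<cdot>\<^sub>v b)"
  by (intro eq_vecI) auto

lemma conjugate_append_vec: "conjugate (a @\<^sub>v b) = conjugate a @\<^sub>v conjugate b"
  by (intro eq_vecI) auto

lemma zero_append_zero_vec_double [simp]: "0\<^sub>v p @\<^sub>v 0\<^sub>v p = (0\<^sub>v (2 * p) :: 'a :: zero vec)"
  by (intro eq_vecI) auto

lemma append_carrier_vec_double [simp]:
  "a \<in> carrier_vec p \<Longrightarrow> b \<in> carrier_vec p \<Longrightarrow> a @\<^sub>v b \<in> carrier_vec (2 * p)"
  unfolding mult_2 by (rule append_carrier_vec)

lemma append_vec_cases_double: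
  assumes "v \<in> carrier_vec (2 * p)"
  obtains a b where "a \<in> carrier_vec p" "b \<in> carrier_vec p" "v = a @\<^sub>v b"
proof -
  have "v = vec_first v p @\<^sub>v vec_last v p"
    using vec_first_last_append[of v p p] assms by (simp add: mult_2)
  then show thesis
    using that[OF vec_first_carrier vec_last_carrier] by blast
qed

lemma vec_first_append: "a \<in> carrier_vec n \<Longrightarrow> vec_first (a @\<^sub>v b) n = a"
  by (intro eq_vecI) (auto simp: vec_first_def)

lemma vec_first_mult_append_vec:
  assumes A: "A \<in> carrier_mat m (p + p)" and "p \<le> m" and a: "a \<in> carrier_vec p" and b: "b \<in> carrier_vec p"
  shows "vec_first (A *\<^sub>v (a @\<^sub>v b)) p = blk11 p A *\<^sub>v a + blk12 p A *\<^sub>v b"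
proof -
  obtain A1 A2 A3 A4 where split: "split_block A p p = (A1, A2, A3, A4)"
    by (metis prod_cases4)
  have dims: "dim_row A = p + (m - p)" "dim_col A = p + p"
    using A \<open>p \<le> m\<close> by auto
  note blocks = split_block[OF split dims]
  have "A *\<^sub>v (a @\<^sub>v b) = (A1 *\<^sub>v a + A2 *\<^sub>v b) @\<^sub>v (A3 *\<^sub>v a + A4 *\<^sub>v b)"
    by (subst blocks(5)) (rule four_block_mat_mult_vec[OF blocks(1-4) a b])
  moreover have "blk11 p A = A1" "blk12 p A = A2"
    using split by (simp_all add: blk11_def blk12_def)
  ultimately show ?thesis
    using blocks(1,2) a b by (simp add: vec_first_append)
qed

lemma blk_mult_mult_vec:
  assumes A: "A \<in> carrier_mat (2 * p) (2 * p)" and R: "R \<in> carrier_mat p p" and Q: "Q \<in> carrier_mat p p"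
    and x: "x \<in> carrier_vec p"
  shows "(blk11 p A * R + blk12 p A * Q) *\<^sub>v x = vec_first (A *\<^sub>v ((R *\<^sub>v x) @\<^sub>v (Q *\<^sub>v x))) p"
proof -
  have A': "A \<in> carrier_mat (2 * p) (p + p)"
    using A by (simp add: mult_2)
  have B: "blk11 p A \<in> carrier_mat p p" "blk12 p A \<in> carrier_mat p p"
    using A by (simp_all add: blk11_def blk12_def split_block_def Let_def)
  have "(blk11 p A * R + blk12 p A * Q) *\<^sub>v x = blk11 p A *\<^sub>v (R *\<^sub>v x) + blk12 p A *\<^sub>v (Q *\<^sub>v x)"
    using B R Q x
    by (simp add: add_mult_distrib_mat_vec[OF mult_carrier_mat[OF B(1) R] mult_carrier_mat[OF B(2) Q] x])
  also have "\<dots> = vec_first (A *\<^sub>v ((R *\<^sub>v x) @\<^sub>v (Q *\<^sub>v x))) p"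
    using vec_first_mult_append_vec[OF A'] R Q x by simp
  finally show ?thesis .
qed

lemma mat_adjoint_blk11_mult_vec:
  assumes A: "A \<in> carrier_mat p n" and "p \<le> n" and y: "y \<in> carrier_vec p"
  shows "mat_adjoint (blk11 p A) *\<^sub>v y = vec_first (mat_adjoint A *\<^sub>v y) p"
  using assms by (intro eq_vecI) (auto simp: vec_first_def blk11_def split_block_def Let_def scalar_prod_def)

lemma jmat_carrier [simp]: "jmat p \<in> carrier_mat (2 * p) (2 * p)"
  unfolding jmat_def mult_2 by (rule four_block_carrier_mat) simp_all

lemma Jmat_carrier [simp]: "Jmat p \<in> carrier_mat (2 * p) (2 * p)"
  unfolding Jmat_def mult_2 by (rule four_block_carrier_mat) simp_all

lemma Kmat_carrier [simp]: "Kmat p \<in> carrier_mat (2 * p) (2 * p)"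
  unfolding Kmat_def mult_2 by (intro smult_carrier_mat four_block_carrier_mat) simp_all

lemma mat_adjoint_jmat [simp]: "mat_adjoint (jmat p) = jmat p"
  by (rule eq_matI) (auto simp: jmat_def)

lemma jmat_squared: "jmat p * jmat p = 1\<^sub>m (2 * p)"
proof -
  have "- 0\<^sub>m p p = (0\<^sub>m p p :: complex mat)"
    by (rule eq_matI) auto
  then show ?thesis
    unfolding jmat_def mult_2 by (subst mult_four_block_mat) auto
qed

lemma jmat_mult_append_vec:
  assumes "a \<in> carrier_vec p" "b \<in> carrier_vec p"
  shows "jmat p *\<^sub>v (a @\<^sub>v b) = a @\<^sub>v - b"
  unfolding jmat_def using assms by (subst four_block_mat_mult_vec) auto

lemma Jmat_mult_append_vec:
  assumes "a \<in> carrier_vec p" "b \<in> carrier_vec p"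
  shows "Jmat p *\<^sub>v (a @\<^sub>v b) = b @\<^sub>v a"
  unfolding Jmat_def using assms by (subst four_block_mat_mult_vec) auto

lemma Kmat_mult_append_vec:
  assumes "a \<in> carrier_vec p" "b \<in> carrier_vec p"
  shows "Kmat p *\<^sub>v (a @\<^sub>v b) = complex_of_real (1 / sqrt 2) \<cdot>\<^sub>v ((a - b) @\<^sub>v (a + b))"
proof -
  have "four_block_mat (1\<^sub>m p) (- 1\<^sub>m p) (1\<^sub>m p) (1\<^sub>m p) *\<^sub>v (a @\<^sub>v b) = (a - b) @\<^sub>v (a + b)"
    using assms by (subst four_block_mat_mult_vec) auto
  then show ?thesis
    unfolding Kmat_def using assms
    by (subst smult_mat_mult_vec[where n = "p + p" and m = "p + p"]) auto
qed

lemma jmat_cscalar_prod_append_vec: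
  assumes "a \<in> carrier_vec p" "b \<in> carrier_vec p"
  shows "(jmat p *\<^sub>v (a @\<^sub>v b)) \<bullet>c (a @\<^sub>v b) = a \<bullet>c a - b \<bullet>c b"
  using assms by (simp add: jmat_mult_append_vec conjugate_append_vec scalar_prod_append[of _ p _ p])

lemma Kmat_jmat_Kmat_adjoint: "Kmat p * jmat p * mat_adjoint (Kmat p) = Jmat p"
proof -
  define c :: complex where "c = complex_of_real (1 / sqrt 2)"
  let ?F = "four_block_mat (1\<^sub>m p) (- 1\<^sub>m p) (1\<^sub>m p) (1\<^sub>m p) :: complex mat"
  let ?F' = "four_block_mat (1\<^sub>m p) (1\<^sub>m p) (- 1\<^sub>m p) (1\<^sub>m p) :: complex mat"
  have F: "?F \<in> carrier_mat (2 * p) (2 * p)" "?F' \<in> carrier_mat (2 * p) (2 * p)"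
    unfolding mult_2 by (auto intro!: four_block_carrier_mat)
  have K: "Kmat p = c \<cdot>\<^sub>m ?F"
    unfolding Kmat_def c_def ..
  have K': "mat_adjoint (Kmat p) = c \<cdot>\<^sub>m ?F'"
    unfolding c_def by (rule eq_matI) (auto simp: Kmat_def)
  have Fj: "?F * jmat p = four_block_mat (1\<^sub>m p) (1\<^sub>m p) (1\<^sub>m p) (- 1\<^sub>m p)"
    unfolding jmat_def by (subst mult_four_block_mat) auto
  have FjF: "?F * jmat p * ?F' = 2 \<cdot>\<^sub>m Jmat p"
    unfolding Fj Jmat_def by (subst mult_four_block_mat) (auto intro!: eq_matI)
  have cc: "c * (c * 2) = 1"
  proof -
    have "c * (c * 2) = complex_of_real ((1 / sqrt 2) * ((1 / sqrt 2) * 2))"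
      unfolding c_def by (simp only: of_real_mult of_real_numeral)
    also have "(1 / sqrt 2) * ((1 / sqrt 2) * 2) = (1 :: real)"
      by (simp add: field_simps)
    finally show ?thesis
      by simp
  qed
  have Fj_carrier: "?F * jmat p \<in> carrier_mat (2 * p) (2 * p)"
    using F by simp
  have "Kmat p * jmat p * mat_adjoint (Kmat p) = c \<cdot>\<^sub>m (?F * jmat p) * (c \<cdot>\<^sub>m ?F')"
    unfolding K' unfolding K mult_smult_assoc_mat[OF F(1) jmat_carrier] ..
  also have "\<dots> = c \<cdot>\<^sub>m (c \<cdot>\<^sub>m (?F * jmat p * ?F'))"
    unfolding mult_smult_assoc_mat[OF Fj_carrier smult_carrier_mat[OF F(2)]]
      mult_smult_distrib[OF Fj_carrier F(2)] ..
  also have "\<dots> = Jmat p"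
    unfolding FjF using cc by (intro eq_matI) (auto simp: Jmat_def)
  finally show ?thesis .
qed

section \<open>Consequences of \<open>\<beta> J \<beta>\<^sup>* = I\<close>\<close>

lemma beta_Kmat_jmat_adjoint:
  assumes "\<beta> \<in> carrier_mat p (2 * p)" "\<beta> * Jmat p * mat_adjoint \<beta> = 1\<^sub>m p"
  shows "(\<beta> * Kmat p) * jmat p * mat_adjoint (\<beta> * Kmat p) = 1\<^sub>m p"
  using mult_mat_adjoint_congruence[OF assms(1) Kmat_carrier jmat_carrier] assms
  by (simp add: Kmat_jmat_Kmat_adjoint)

text \<open>The left \<open>p \<times> p\<close> block of a \<open>\<beta>\<close> with \<open>\<beta> J \<beta>\<^sup>* = I\<close> is invertible: if its adjoint
  kills \<open>y\<close>, then \<open>\<beta>\<^sup>* y = (0, s)\<close> is \<open>J\<close>-neutral and \<open>y\<^sup>* y = (\<beta>\<^sup>* y)\<^sup>* J (\<beta>\<^sup>* y) = 0\<close>.\<close>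

lemma left_block_inj:
  assumes \<beta>: "\<beta> \<in> carrier_mat p (2 * p)" "\<beta> * Jmat p * mat_adjoint \<beta> = 1\<^sub>m p"
    and a: "a \<in> carrier_vec p" "\<beta> *\<^sub>v (a @\<^sub>v 0\<^sub>v p) = 0\<^sub>v p"
  shows "a = 0\<^sub>v p"
proof (rule inj_if_mat_adjoint_inj)
  let ?B = "blk11 p \<beta>"
  have \<beta>': "\<beta> \<in> carrier_mat p (p + p)"
    using \<beta>(1) by (simp add: mult_2)
  show B: "?B \<in> carrier_mat p p"
    by (simp add: blk11_def split_block_def Let_def)
  show "a \<in> carrier_vec p"
    by (fact a(1))
  have "blk12 p \<beta> *\<^sub>v 0\<^sub>v p = 0\<^sub>v p"
    by (intro eq_vecI) (auto simp: blk12_def split_block_def Let_def scalar_prod_def)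
  then have "?B *\<^sub>v a = vec_first (\<beta> *\<^sub>v (a @\<^sub>v 0\<^sub>v p)) p"
    using vec_first_mult_append_vec[OF \<beta>' order.refl a(1) zero_carrier_vec] B a(1) by simp
  also have "\<dots> = 0\<^sub>v p"
    unfolding a(2) by (intro eq_vecI) (auto simp: vec_first_def)
  finally show "?B *\<^sub>v a = 0\<^sub>v p" .
  fix y
  assume y: "y \<in> carrier_vec p" and By: "mat_adjoint ?B *\<^sub>v y = 0\<^sub>v p"
  define s where "s = mat_adjoint \<beta> *\<^sub>v y"
  have "s \<in> carrier_vec (2 * p)"
    unfolding s_def using mult_mat_vec_carrier[OF mat_adjoint_carrier[OF \<beta>(1)] y] .
  then obtain s1 s2 where s12: "s1 \<in> carrier_vec p" "s2 \<in> carrier_vec p" "s = s1 @\<^sub>v s2"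
    by (rule append_vec_cases_double)
  have "s1 = vec_first s p"
    using s12 by (simp add: vec_first_append)
  also have "\<dots> = 0\<^sub>v p"
    using mat_adjoint_blk11_mult_vec[OF \<beta>(1) _ y] By by (simp add: s_def)
  finally have "s = 0\<^sub>v p @\<^sub>v s2"
    using s12 by simp
  then have "(Jmat p *\<^sub>v s) \<bullet>c s = 0"
    using s12 by (simp add: Jmat_mult_append_vec conjugate_append_vec scalar_prod_append[of _ p _ p])
  moreover have "y \<bullet>c y = (Jmat p *\<^sub>v s) \<bullet>c s"
    using cscalar_prod_congruence[OF \<beta>(1) Jmat_carrier y] \<beta>(2) y by (simp add: s_def)
  ultimately show "y = 0\<^sub>v p"
    using y by simp
qed

lemma Kmat_first_half_nonzero:
  assumes \<beta>: "\<beta> \<in> carrier_mat p (2 * p)" "\<beta> * Jmat p * mat_adjoint \<beta> = 1\<^sub>m p"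
    and v: "v \<in> carrier_vec (2 * p)" "v \<noteq> 0\<^sub>v (2 * p)"
    and kernel: "(\<beta> * Kmat p) *\<^sub>v (jmat p *\<^sub>v v) = 0\<^sub>v p"
  shows "vec_first (Kmat p *\<^sub>v v) p \<noteq> 0\<^sub>v p"
proof
  assume first: "vec_first (Kmat p *\<^sub>v v) p = 0\<^sub>v p"
  obtain a b where ab: "a \<in> carrier_vec p" "b \<in> carrier_vec p" "v = a @\<^sub>v b"
    using append_vec_cases_double[OF v(1)] .
  define c :: complex where "c = complex_of_real (1 / sqrt 2)"
  have c: "c \<noteq> 0"
    unfolding c_def by simp
  have "c \<cdot>\<^sub>v (a - b) = 0\<^sub>v p"
    using first ab by (simp add: Kmat_mult_append_vec smult_append_vec vec_first_append c_def)
  then have "b = a"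
    using c ab by (auto simp: vec_eq_iff)
  have "Kmat p *\<^sub>v (jmat p *\<^sub>v v) = c \<cdot>\<^sub>v ((a - - a) @\<^sub>v (a + - a))"
    using ab \<open>b = a\<close> by (simp add: jmat_mult_append_vec Kmat_mult_append_vec c_def)
  also have "\<dots> = (2 * c) \<cdot>\<^sub>v (a @\<^sub>v 0\<^sub>v p)"
    using ab(1) by (auto simp: vec_eq_iff)
  finally have Kjv: "Kmat p *\<^sub>v (jmat p *\<^sub>v v) = (2 * c) \<cdot>\<^sub>v (a @\<^sub>v 0\<^sub>v p)" .
  have "(2 * c) \<cdot>\<^sub>v (\<beta> *\<^sub>v (a @\<^sub>v 0\<^sub>v p)) = \<beta> *\<^sub>v (Kmat p *\<^sub>v (jmat p *\<^sub>v v))"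
    unfolding Kjv using ab(1) by (simp add: mult_mat_vec[OF \<beta>(1)])
  also have "\<dots> = 0\<^sub>v p"
    using kernel assoc_mult_mat_vec[OF \<beta>(1) Kmat_carrier mult_mat_vec_carrier[OF jmat_carrier v(1)]]
    by simp
  finally have "\<beta> *\<^sub>v (a @\<^sub>v 0\<^sub>v p) = 0\<^sub>v p"
    using smult_vec_eq_zero_iff[of "2 * c"] c ab(1) \<beta>(1) by simp
  then have "a = 0\<^sub>v p"
    using left_block_inj[OF \<beta> ab(1)] by simp
  then show False
    using v(2) ab \<open>b = a\<close> by simp
qed

section \<open>Projections preserving \<open>j\<close>-nonpositivity\<close>

lemma projection_cscalar_prod:
  fixes G S :: "complex mat"
  assumes G: "G \<in> carrier_mat q n" and S: "S \<in> carrier_mat n n" "mat_adjoint S = S"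
    and GSG: "G * S * mat_adjoint G = 1\<^sub>m q" and u: "u \<in> carrier_vec n"
  defines "x \<equiv> G *\<^sub>v (S *\<^sub>v u)"
  defines "w \<equiv> mat_adjoint G *\<^sub>v x"
  shows "(S *\<^sub>v (u - w)) \<bullet>c (u - w) = (S *\<^sub>v u) \<bullet>c u - x \<bullet>c x"
    and "(S *\<^sub>v w) \<bullet>c w = x \<bullet>c x"
    and "G *\<^sub>v (S *\<^sub>v (u - w)) = 0\<^sub>v q"
proof -
  have Su: "S *\<^sub>v u \<in> carrier_vec n"
    using S u by simp
  have x: "x \<in> carrier_vec q"
    unfolding x_def using mult_mat_vec_carrier[OF G Su] .
  have w: "w \<in> carrier_vec n"
    unfolding w_def using mult_mat_vec_carrier[OF mat_adjoint_carrier[OF G] x] .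
  have Sw: "S *\<^sub>v w \<in> carrier_vec n"
    using S w by simp
  have "(G * S * mat_adjoint G) *\<^sub>v x = G *\<^sub>v (S *\<^sub>v w)"
    unfolding w_def using G S x
    by (simp add: assoc_mult_mat_vec[OF mult_carrier_mat[OF G S(1)] mat_adjoint_carrier[OF G] x]
        assoc_mult_mat_vec[OF G S(1) mult_mat_vec_carrier[OF mat_adjoint_carrier[OF G] x]])
  then have GSw: "G *\<^sub>v (S *\<^sub>v w) = x"
    using GSG x by simp
  have uw: "(S *\<^sub>v u) \<bullet>c w = x \<bullet>c x"
    using cscalar_prod_mat_adjoint[OF G Su x] by (simp add: x_def w_def)
  have "(S *\<^sub>v w) \<bullet>c u = w \<bullet>c (S *\<^sub>v u)"
    using cscalar_prod_mat_adjoint[OF S(1) w u] S(2) by simp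
  also have "\<dots> = x \<bullet>c x"
    using cscalar_prod_mat_adjoint[OF mat_adjoint_carrier[OF G] x Su] by (simp add: w_def x_def)
  finally have wu: "(S *\<^sub>v w) \<bullet>c u = x \<bullet>c x" .
  show ww: "(S *\<^sub>v w) \<bullet>c w = x \<bullet>c x"
    using cscalar_prod_mat_adjoint[OF G Sw x] GSw by (simp add: w_def)
  have Suw: "S *\<^sub>v (u - w) = S *\<^sub>v u - S *\<^sub>v w"
    using S u w by (simp add: mult_minus_distrib_mat_vec)
  have uw_conj: "conjugate (u - w) \<in> carrier_vec n"
    using u w by simp
  have "(S *\<^sub>v (u - w)) \<bullet>c (u - w)
      = ((S *\<^sub>v u) \<bullet>c u - (S *\<^sub>v u) \<bullet>c w) - ((S *\<^sub>v w) \<bullet>c u - (S *\<^sub>v w) \<bullet>c w)"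
    unfolding Suw minus_scalar_prod_distrib[OF Su Sw uw_conj]
      cscalar_prod_minus_right[OF u w Su] cscalar_prod_minus_right[OF u w Sw] ..
  then show "(S *\<^sub>v (u - w)) \<bullet>c (u - w) = (S *\<^sub>v u) \<bullet>c u - x \<bullet>c x"
    using uw wu ww by simp
  show "G *\<^sub>v (S *\<^sub>v (u - w)) = 0\<^sub>v q"
    unfolding Suw using G Su Sw GSw x by (simp add: mult_minus_distrib_mat_vec x_def)
qed

lemma projection_preserves_nonpositive:
  fixes G S :: "complex mat"
  assumes G: "G \<in> carrier_mat q n" and S: "S \<in> carrier_mat n n" "mat_adjoint S = S"
    and GSG: "G * S * mat_adjoint G = 1\<^sub>m q"
    and u: "u \<in> carrier_vec n" "u \<noteq> 0\<^sub>v n" and nonpos: "Re ((S *\<^sub>v u) \<bullet>c u) \<le> 0"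
  defines "v \<equiv> u - mat_adjoint G *\<^sub>v (G *\<^sub>v (S *\<^sub>v u))"
  shows "v \<noteq> 0\<^sub>v n" "Re ((S *\<^sub>v v) \<bullet>c v) \<le> 0" "G *\<^sub>v (S *\<^sub>v v) = 0\<^sub>v q"
proof -
  define x where "x = G *\<^sub>v (S *\<^sub>v u)"
  define w where "w = mat_adjoint G *\<^sub>v x"
  note form = projection_cscalar_prod[OF G S GSG u(1), folded x_def w_def]
  have v: "v = u - w"
    unfolding v_def w_def x_def ..
  have x: "x \<in> carrier_vec q"
    unfolding x_def using mult_mat_vec_carrier[OF G] S u by simp
  have w: "w \<in> carrier_vec n"
    unfolding w_def using mult_mat_vec_carrier[OF mat_adjoint_carrier[OF G] x] .
  have xx: "Im (x \<bullet>c x) = 0" "0 \<le> Re (x \<bullet>c x)"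
    using conjugate_square_ge_0_vec[of x] by (auto simp: less_eq_complex_def)
  show "Re ((S *\<^sub>v v) \<bullet>c v) \<le> 0"
    unfolding v form(1) using nonpos xx by simp
  show "G *\<^sub>v (S *\<^sub>v v) = 0\<^sub>v q"
    unfolding v by (fact form(3))
  show "v \<noteq> 0\<^sub>v n"
  proof
    assume "v = 0\<^sub>v n"
    then have "u = w"
      unfolding v using u(1) w by (auto simp: vec_eq_iff)
    then have "Re (x \<bullet>c x) \<le> 0"
      using form(2) nonpos by simp
    then have "x \<bullet>c x = 0"
      using xx by (simp add: complex_eq_iff)
    then have "w = 0\<^sub>v n"
      using x mat_adjoint_carrier[OF G] by (simp add: w_def mult_mat_vec_zero)
    then show False
      using \<open>u = w\<close> u(2) by simp
  qed
qed

section \<open>The transfer matrix at \<open>\<lambda> = \<i>\<close>\<close>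

lemma Cmat_carrier: "Cmat p \<beta> k \<in> carrier_mat (2 * p) (2 * p)"
  unfolding Cmat_def by (rule minus_carrier_mat[OF jmat_carrier])

lemma Cmat_eq:
  assumes "\<beta> k \<in> carrier_mat p (2 * p)"
  shows "Cmat p \<beta> k = 2 \<cdot>\<^sub>m (mat_adjoint (\<beta> k * Kmat p) * (\<beta> k * Kmat p)) - jmat p"
proof -
  have "mat_adjoint (Kmat p) * mat_adjoint (\<beta> k) \<in> carrier_mat (2 * p) p"
    using mult_carrier_mat[OF mat_adjoint_carrier[OF Kmat_carrier] mat_adjoint_carrier[OF assms]] .
  then have "mat_adjoint (Kmat p) * mat_adjoint (\<beta> k) * \<beta> k * Kmat p
      = (mat_adjoint (Kmat p) * mat_adjoint (\<beta> k)) * (\<beta> k * Kmat p)"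
    by (rule assoc_mult_mat[OF _ assms Kmat_carrier])
  then show ?thesis
    unfolding Cmat_def mat_adjoint_mult[OF assms Kmat_carrier] by simp
qed

lemma mat_adjoint_Cmat:
  assumes "\<beta> k \<in> carrier_mat p (2 * p)"
  shows "mat_adjoint (Cmat p \<beta> k) = Cmat p \<beta> k"
proof -
  define G where "G = \<beta> k * Kmat p"
  have G: "G \<in> carrier_mat p (2 * p)"
    using assms by (simp add: G_def)
  have GG: "mat_adjoint G * G \<in> carrier_mat (2 * p) (2 * p)"
    using mult_carrier_mat[OF mat_adjoint_carrier[OF G] G] .
  have "mat_adjoint (mat_adjoint G * G) = mat_adjoint G * G"
    using mat_adjoint_mult[OF mat_adjoint_carrier[OF G] G] by simp
  then show ?thesis
    unfolding Cmat_eq[of \<beta> k p, OF assms, folded G_def]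
      mat_adjoint_minus[OF smult_carrier_mat[OF GG] jmat_carrier] mat_adjoint_smult
    by simp
qed

lemma Wmat_carrier: "Wmat p \<beta> k l \<in> carrier_mat (2 * p) (2 * p)"
proof (induction k)
  case (Suc k)
  have "jmat p * Cmat p \<beta> k * Wmat p \<beta> k l \<in> carrier_mat (2 * p) (2 * p)"
    using mult_carrier_mat[OF mult_carrier_mat[OF jmat_carrier Cmat_carrier] Suc.IH] .
  then show ?case
    by (simp add: minus_carrier_mat)
qed simp

lemma mat_adjoint_Wmat_Suc_i:
  assumes "\<beta> k \<in> carrier_mat p (2 * p)"
  shows "mat_adjoint (Wmat p \<beta> (Suc k) \<i>)
       = mat_adjoint (Wmat p \<beta> k \<i>) * (1\<^sub>m (2 * p) - Cmat p \<beta> k * jmat p)"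
proof -
  let ?W = "Wmat p \<beta> k \<i>" and ?C = "Cmat p \<beta> k"
  have W: "?W \<in> carrier_mat (2 * p) (2 * p)"
    by (rule Wmat_carrier)
  have C: "?C \<in> carrier_mat (2 * p) (2 * p)" "mat_adjoint ?C = ?C"
    using assms by (simp_all add: Cmat_carrier mat_adjoint_Cmat)
  have jCW: "jmat p * ?C * ?W \<in> carrier_mat (2 * p) (2 * p)"
    using mult_carrier_mat[OF mult_carrier_mat[OF jmat_carrier C(1)] W] .
  have "Wmat p \<beta> (Suc k) \<i> = ?W - jmat p * ?C * ?W"
    by (rule eq_matI) auto
  moreover have "mat_adjoint (jmat p * ?C * ?W) = mat_adjoint ?W * (?C * jmat p)"
    using mat_adjoint_mult[OF mult_carrier_mat[OF jmat_carrier C(1)] W]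
      mat_adjoint_mult[OF jmat_carrier C(1)] C(2) by simp
  ultimately have "mat_adjoint (Wmat p \<beta> (Suc k) \<i>) = mat_adjoint ?W - mat_adjoint ?W * (?C * jmat p)"
    using mat_adjoint_minus[OF W jCW] by simp
  also have "\<dots> = mat_adjoint ?W * (1\<^sub>m (2 * p) - ?C * jmat p)"
    using mult_minus_distrib_mat[OF mat_adjoint_carrier[OF W] one_carrier_mat
        mult_carrier_mat[OF C(1) jmat_carrier]] W by simp
  finally show ?thesis .
qed

lemma one_minus_Cmat_jmat_mult_vec:
  assumes "\<beta> k \<in> carrier_mat p (2 * p)" and u: "u \<in> carrier_vec (2 * p)"
  defines "G \<equiv> \<beta> k * Kmat p"
  shows "(1\<^sub>m (2 * p) - Cmat p \<beta> k * jmat p) *\<^sub>v u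
       = 2 \<cdot>\<^sub>v (u - mat_adjoint G *\<^sub>v (G *\<^sub>v (jmat p *\<^sub>v u)))"
proof -
  have G: "G \<in> carrier_mat p (2 * p)"
    using assms by (simp add: G_def)
  let ?y = "mat_adjoint G *\<^sub>v (G *\<^sub>v (jmat p *\<^sub>v u))"
  have y: "?y \<in> carrier_vec (2 * p)"
    using mult_mat_vec_carrier[OF mat_adjoint_carrier[OF G]
        mult_mat_vec_carrier[OF G mult_mat_vec_carrier[OF jmat_carrier u]]] .
  have GG: "mat_adjoint G * G \<in> carrier_mat (2 * p) (2 * p)"
    using mult_carrier_mat[OF mat_adjoint_carrier[OF G] G] .
  have ju: "jmat p *\<^sub>v u \<in> carrier_vec (2 * p)"
    using mult_mat_vec_carrier[OF jmat_carrier u] .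
  have "Cmat p \<beta> k *\<^sub>v (jmat p *\<^sub>v u)
      = (2 \<cdot>\<^sub>m (mat_adjoint G * G)) *\<^sub>v (jmat p *\<^sub>v u) - jmat p *\<^sub>v (jmat p *\<^sub>v u)"
    unfolding Cmat_eq[of \<beta> k p, OF assms(1), folded G_def]
    by (rule minus_mult_distrib_mat_vec[OF smult_carrier_mat[OF GG] jmat_carrier ju])
  also have "\<dots> = 2 \<cdot>\<^sub>v ?y - u"
    using assoc_mult_mat_vec[OF jmat_carrier jmat_carrier u, symmetric] u
      assoc_mult_mat_vec[OF mat_adjoint_carrier[OF G] G ju]
    by (simp add: jmat_squared smult_mat_mult_vec[OF GG ju])
  finally have "Cmat p \<beta> k *\<^sub>v (jmat p *\<^sub>v u) = 2 \<cdot>\<^sub>v ?y - u" .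
  then have "(1\<^sub>m (2 * p) - Cmat p \<beta> k * jmat p) *\<^sub>v u = u - (2 \<cdot>\<^sub>v ?y - u)"
    using u assoc_mult_mat_vec[OF Cmat_carrier jmat_carrier u]
    by (simp add: minus_mult_distrib_mat_vec[OF one_carrier_mat mult_carrier_mat[OF Cmat_carrier jmat_carrier] u])
  moreover have "u - (2 \<cdot>\<^sub>v z - u) = 2 \<cdot>\<^sub>v (u - z)" if "z \<in> carrier_vec (2 * p)" for z
    using u that by (auto simp: vec_eq_iff)
  ultimately show ?thesis
    using y by simp
qed

lemma transfer_step_nonpositive:
  assumes \<beta>: "\<beta> k \<in> carrier_mat p (2 * p)" "\<beta> k * Jmat p * mat_adjoint (\<beta> k) = 1\<^sub>m p"
    and u: "u \<in> carrier_vec (2 * p)" "u \<noteq> 0\<^sub>v (2 * p)" "Re ((jmat p *\<^sub>v u) \<bullet>c u) \<le> 0"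
  defines "y \<equiv> (1\<^sub>m (2 * p) - Cmat p \<beta> k * jmat p) *\<^sub>v u"
  shows "y \<in> carrier_vec (2 * p)" "y \<noteq> 0\<^sub>v (2 * p)" "Re ((jmat p *\<^sub>v y) \<bullet>c y) \<le> 0"
    "(\<beta> k * Kmat p) *\<^sub>v (jmat p *\<^sub>v y) = 0\<^sub>v p"
proof -
  define G where "G = \<beta> k * Kmat p"
  have G: "G \<in> carrier_mat p (2 * p)"
    using mult_carrier_mat[OF \<beta>(1) Kmat_carrier] by (simp add: G_def)
  define v where "v = u - mat_adjoint G *\<^sub>v (G *\<^sub>v (jmat p *\<^sub>v u))"
  have v: "v \<noteq> 0\<^sub>v (2 * p)" "Re ((jmat p *\<^sub>v v) \<bullet>c v) \<le> 0" "G *\<^sub>v (jmat p *\<^sub>v v) = 0\<^sub>v p"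
    using projection_preserves_nonpositive[OF G jmat_carrier mat_adjoint_jmat
        beta_Kmat_jmat_adjoint[OF \<beta>, folded G_def] u]
    unfolding v_def by blast+
  have v_carrier: "v \<in> carrier_vec (2 * p)"
    unfolding v_def using mult_mat_vec_carrier[OF mat_adjoint_carrier[OF G]
        mult_mat_vec_carrier[OF G mult_mat_vec_carrier[OF jmat_carrier u(1)]]] u(1)
    by simp
  have jv: "jmat p *\<^sub>v v \<in> carrier_vec (2 * p)"
    using mult_mat_vec_carrier[OF jmat_carrier v_carrier] .
  have y: "y = 2 \<cdot>\<^sub>v v"
    unfolding y_def v_def G_def by (rule one_minus_Cmat_jmat_mult_vec[of \<beta> k p u, OF \<beta>(1) u(1)])
  show "y \<in> carrier_vec (2 * p)"
    using v_carrier y by simp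
  show "y \<noteq> 0\<^sub>v (2 * p)"
    using v(1) smult_vec_eq_zero_iff[of 2 v] v_carrier y by simp
  have "(jmat p *\<^sub>v y) \<bullet>c y = 4 * ((jmat p *\<^sub>v v) \<bullet>c v)"
    unfolding y using jv carrier_vec_conjugate[OF v_carrier]
    by (simp add: mult_mat_vec[OF jmat_carrier v_carrier] conjugate_smult_vec)
  then show "Re ((jmat p *\<^sub>v y) \<bullet>c y) \<le> 0"
    using v(2) by simp
  show "(\<beta> k * Kmat p) *\<^sub>v (jmat p *\<^sub>v y) = 0\<^sub>v p"
    unfolding y G_def[symmetric] using v(3)
    by (simp add: mult_mat_vec[OF jmat_carrier v_carrier] mult_mat_vec[OF G jv])
qed

lemma Wmat_adjoint_i_nonpositive_image:
  assumes \<beta>_dim: "\<forall>k \<le> N. \<beta> k \<in> carrier_mat p (2 * p)"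
    and \<beta>_J: "\<forall>k \<le> N. \<beta> k * Jmat p * mat_adjoint (\<beta> k) = 1\<^sub>m p"
  shows "k \<le> N \<Longrightarrow> u \<in> carrier_vec (2 * p) \<Longrightarrow> u \<noteq> 0\<^sub>v (2 * p) \<Longrightarrow> Re ((jmat p *\<^sub>v u) \<bullet>c u) \<le> 0
    \<Longrightarrow> mat_adjoint (Wmat p \<beta> (Suc k) \<i>) *\<^sub>v u \<noteq> 0\<^sub>v (2 * p)
      \<and> (\<beta> 0 * Kmat p) *\<^sub>v (jmat p *\<^sub>v (mat_adjoint (Wmat p \<beta> (Suc k) \<i>) *\<^sub>v u)) = 0\<^sub>v p"
proof (induction k arbitrary: u)
  case 0
  let ?T = "1\<^sub>m (2 * p) - Cmat p \<beta> 0 * jmat p"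
  have T: "?T \<in> carrier_mat (2 * p) (2 * p)"
    by (rule minus_carrier_mat[OF mult_carrier_mat[OF Cmat_carrier jmat_carrier]])
  have "mat_adjoint (Wmat p \<beta> (Suc 0) \<i>) = mat_adjoint (Wmat p \<beta> 0 \<i>) * ?T"
    using \<beta>_dim by (intro mat_adjoint_Wmat_Suc_i) simp
  also have "\<dots> = ?T"
    using left_mult_one_mat[OF T] by simp
  finally have W: "mat_adjoint (Wmat p \<beta> (Suc 0) \<i>) = ?T" .
  show ?case
    unfolding W using transfer_step_nonpositive[of \<beta> 0 p u] \<beta>_dim \<beta>_J 0 by simp
next
  case (Suc k)
  let ?T = "1\<^sub>m (2 * p) - Cmat p \<beta> (Suc k) * jmat p"
  have T: "?T \<in> carrier_mat (2 * p) (2 * p)"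
    by (rule minus_carrier_mat[OF mult_carrier_mat[OF Cmat_carrier jmat_carrier]])
  have W: "mat_adjoint (Wmat p \<beta> (Suc (Suc k)) \<i>) = mat_adjoint (Wmat p \<beta> (Suc k) \<i>) * ?T"
    using \<beta>_dim Suc.prems(1) by (intro mat_adjoint_Wmat_Suc_i) simp
  have Tu: "?T *\<^sub>v u \<in> carrier_vec (2 * p)" "?T *\<^sub>v u \<noteq> 0\<^sub>v (2 * p)"
    "Re ((jmat p *\<^sub>v (?T *\<^sub>v u)) \<bullet>c (?T *\<^sub>v u)) \<le> 0"
    using transfer_step_nonpositive[of \<beta> "Suc k" p u] \<beta>_dim \<beta>_J Suc.prems by auto
  show ?case
    unfolding W assoc_mult_mat_vec[OF mat_adjoint_carrier[OF Wmat_carrier] T Suc.prems(2)]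
    by (rule Suc.IH) (use Suc.prems Tu in auto)
qed

lemma RQ_append_nonpositive:
  fixes R Q :: "complex mat"
  assumes R: "R \<in> carrier_mat p p" and Q: "Q \<in> carrier_mat p p"
    and pd: "posdef (mat_adjoint R * R + mat_adjoint Q * Q)"
    and sd: "psd (mat_adjoint Q * Q - mat_adjoint R * R)"
    and x: "x \<in> carrier_vec p" "x \<noteq> 0\<^sub>v p"
  defines "u \<equiv> (R *\<^sub>v x) @\<^sub>v (Q *\<^sub>v x)"
  shows "u \<noteq> 0\<^sub>v (2 * p)" "Re ((jmat p *\<^sub>v u) \<bullet>c u) \<le> 0"
proof -
  define r q where "r = R *\<^sub>v x" and "q = Q *\<^sub>v x"
  have r: "r \<in> carrier_vec p" and q: "q \<in> carrier_vec p"
    using R Q x by (simp_all add: r_def q_def)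
  have RR: "mat_adjoint R * R \<in> carrier_mat p p" and QQ: "mat_adjoint Q * Q \<in> carrier_mat p p"
    using mult_carrier_mat[OF mat_adjoint_carrier[OF R] R] mult_carrier_mat[OF mat_adjoint_carrier[OF Q] Q] .
  have "((mat_adjoint R * R + mat_adjoint Q * Q) *\<^sub>v x) \<bullet>c x = r \<bullet>c r + q \<bullet>c q"
    using RR QQ x cscalar_prod_adjoint_mult_self[OF R x(1)] cscalar_prod_adjoint_mult_self[OF Q x(1)]
    by (simp add: add_mult_distrib_mat_vec[OF RR QQ x(1)] add_scalar_prod_distrib[of _ p] r_def q_def)
  moreover have "0 < Re (((mat_adjoint R * R + mat_adjoint Q * Q) *\<^sub>v x) \<bullet>c x)"
    using pd x RR Q by (auto simp: posdef_def)
  ultimately have pos: "0 < Re (r \<bullet>c r + q \<bullet>c q)"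
    by simp
  have "((mat_adjoint Q * Q - mat_adjoint R * R) *\<^sub>v x) \<bullet>c x = q \<bullet>c q - r \<bullet>c r"
    using RR QQ x cscalar_prod_adjoint_mult_self[OF R x(1)] cscalar_prod_adjoint_mult_self[OF Q x(1)]
    by (simp add: minus_mult_distrib_mat_vec[OF QQ RR x(1)] minus_scalar_prod_distrib[of _ p] r_def q_def)
  moreover have "0 \<le> Re (((mat_adjoint Q * Q - mat_adjoint R * R) *\<^sub>v x) \<bullet>c x)"
    using sd x QQ R by (auto simp: psd_def)
  ultimately have "Re (r \<bullet>c r) \<le> Re (q \<bullet>c q)"
    by simp
  then show "Re ((jmat p *\<^sub>v u) \<bullet>c u) \<le> 0"
    unfolding u_def r_def[symmetric] q_def[symmetric] using r q by (simp add: jmat_cscalar_prod_append_vec)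
  show "u \<noteq> 0\<^sub>v (2 * p)"
  proof
    assume "u = 0\<^sub>v (2 * p)"
    then have "r = 0\<^sub>v p \<and> q = 0\<^sub>v p"
      using append_vec_eq[OF r zero_carrier_vec[of p], of q "0\<^sub>v p"]
      unfolding u_def r_def[symmetric] q_def[symmetric] by simp
    then show False
      using pos by simp
  qed
qed

lemma calW_upper_half_nonzero:
  assumes \<beta>_dim: "\<forall>k \<le> N. \<beta> k \<in> carrier_mat p (2 * p)"
    and \<beta>_J: "\<forall>k \<le> N. \<beta> k * Jmat p * mat_adjoint (\<beta> k) = 1\<^sub>m p"
    and u: "u \<in> carrier_vec (2 * p)" "u \<noteq> 0\<^sub>v (2 * p)" "Re ((jmat p *\<^sub>v u) \<bullet>c u) \<le> 0"
  shows "vec_first (calW p \<beta> N (- \<i>) *\<^sub>v u) p \<noteq> 0\<^sub>v p"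
proof -
  let ?W = "Wmat p \<beta> (Suc N) \<i>"
  have W: "mat_adjoint ?W \<in> carrier_mat (2 * p) (2 * p)"
    using mat_adjoint_carrier[OF Wmat_carrier] .
  have "calW p \<beta> N (- \<i>) *\<^sub>v u = Kmat p *\<^sub>v (mat_adjoint ?W *\<^sub>v u)"
    using assoc_mult_mat_vec[OF Kmat_carrier W u(1)] by (simp add: calW_def del: Wmat.simps)
  moreover have "mat_adjoint ?W *\<^sub>v u \<noteq> 0\<^sub>v (2 * p)"
    "(\<beta> 0 * Kmat p) *\<^sub>v (jmat p *\<^sub>v (mat_adjoint ?W *\<^sub>v u)) = 0\<^sub>v p"
    using Wmat_adjoint_i_nonpositive_image[OF \<beta>_dim \<beta>_J order.refl u] by blast+
  ultimately show ?thesis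
    using Kmat_first_half_nonzero[of "\<beta> 0" p "mat_adjoint ?W *\<^sub>v u"] \<beta>_dim \<beta>_J
      mult_mat_vec_carrier[OF W u(1)]
    by (simp del: Wmat.simps)
qed

theorem proposition5p5:
  fixes p N :: nat and \<beta> :: "nat \<Rightarrow> complex mat" and R Q :: "complex \<Rightarrow> complex mat"
  assumes "p \<ge> 1"
    and beta_dim: "\<forall>k \<le> N. \<beta> k \<in> carrier_mat p (2 * p)"
    and beta_J: "\<forall>k \<le> N. \<beta> k * Jmat p * mat_adjoint (\<beta> k) = 1\<^sub>m p"
    and RQ_dim: "\<forall>z \<in> lower_half. R z \<in> carrier_mat p p \<and> Q z \<in> carrier_mat p p"
    and mero: "\<forall>a < p. \<forall>b < p. (\<lambda>z. R z $$ (a, b)) meromorphic_on lower_half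
                              \<and> (\<lambda>z. Q z $$ (a, b)) meromorphic_on lower_half"
    and at_mi: "\<forall>a < p. \<forall>b < p. (\<lambda>z. R z $$ (a, b)) analytic_on {- \<i>}
                              \<and> (\<lambda>z. Q z $$ (a, b)) analytic_on {- \<i>}"
    and pos: "\<forall>z \<in> lower_half. (\<forall>a < p. \<forall>b < p. (\<lambda>w. R w $$ (a, b)) analytic_on {z}
                                        \<and> (\<lambda>w. Q w $$ (a, b)) analytic_on {z}) \<longrightarrow>
                 posdef (mat_adjoint (R z) * R z + mat_adjoint (Q z) * Q z)"
    and le: "\<forall>z \<in> lower_half. (\<forall>a < p. \<forall>b < p. (\<lambda>w. R w $$ (a, b)) analytic_on {z}
                                        \<and> (\<lambda>w. Q w $$ (a, b)) analytic_on {z}) \<longrightarrow>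
                 psd (mat_adjoint (Q z) * Q z - mat_adjoint (R z) * R z)"
  shows "det (blk11 p (calW p \<beta> N (- \<i>)) * R (- \<i>) + blk12 p (calW p \<beta> N (- \<i>)) * Q (- \<i>)) \<noteq> 0"
proof -
  \<comment> \<open>Only the values at \<open>-\<i>\<close> enter.\<close>
  let ?R = "R (- \<i>)" and ?Q = "Q (- \<i>)" and ?A = "calW p \<beta> N (- \<i>)"
  have "- \<i> \<in> lower_half"
    by (simp add: lower_half_def)
  then have RQ: "?R \<in> carrier_mat p p" "?Q \<in> carrier_mat p p"
    and pd: "posdef (mat_adjoint ?R * ?R + mat_adjoint ?Q * ?Q)"
    and sd: "psd (mat_adjoint ?Q * ?Q - mat_adjoint ?R * ?R)"
    using RQ_dim pos le at_mi by blast+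
  have A: "?A \<in> carrier_mat (2 * p) (2 * p)"
    unfolding calW_def using mult_carrier_mat[OF Kmat_carrier mat_adjoint_carrier[OF Wmat_carrier]] .
  have M: "blk11 p ?A * ?R + blk12 p ?A * ?Q \<in> carrier_mat p p"
    using A RQ by (auto simp: blk11_def blk12_def split_block_def Let_def)
  have "(blk11 p ?A * ?R + blk12 p ?A * ?Q) *\<^sub>v x \<noteq> 0\<^sub>v p" if x: "x \<in> carrier_vec p" "x \<noteq> 0\<^sub>v p" for x
    using RQ_append_nonpositive[OF RQ pd sd x] calW_upper_half_nonzero[OF beta_dim beta_J]
      blk_mult_mult_vec[OF A RQ x(1)] RQ x
    by simp
  then show ?thesis
    using det_0_iff_vec_prod_zero[OF M] by blast
qed

end
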